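(* Let $a,r>0$, $\beta\neq0$ and $\theta\in(\theta_0,\frac\pi2)$ with $\tan\theta_0\ge\frac{|\beta|}{\sqrt2}$. Then there exists $M=M(a,\beta,\theta,r)>0$ such that $$\inf_{\xi'\in\mathbb{R}^{N-1},\ \lambda\in\Sigma_{\theta,r}}|\mathcal{A}_a(\lambda,\xi')|\ge M.$$
   Context: $\Sigma_{\theta,r}=\{z\in\mathbb{C}\setminus\{0\}:|\arg z|<\pi-\theta,|z|>r\}$. For $\lambda\in\Sigma_{\theta,r}$, $\xi'\in\mathbb{R}^{N-1}$: $A=|\xi'|$, $B_a=\sqrt{\lambda+a+|\xi'|^2}$ with positive real part, $z_{1,2}(\lambda)=\frac{2\lambda+a(1+\beta^2/2)\pm\sqrt{a^2(1+\beta^2/2)^2-2\lambda^2\beta^2}}{2(1+\beta^2/2)}$, $L_j=\sqrt{|\xi'|^2+z_j}$ with ${\rm Re}\,L_j>0$, $\eta=\frac{a(1+\beta^2/2)}{\sqrt2|\beta|}$. $\mathcal{A}_a(\lambda,\xi')=B_a^3(L_1+L_2)-A^2B_a^2-A^2L_1L_2$ for $\lambda\neq\eta$, and $\mathcal{A}_a(\eta,\xi')=\lim_{\lambda\to\eta}\mathcal{A}_a(\lambda,\xi')$. *)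

theory Defs
  imports "HOL-Analysis.Analysis"
begin

definition sector :: "real \<Rightarrow> real \<Rightarrow> complex set" where
  "sector \<theta> r = {z. z \<noteq> 0 \<and> \<bar>Arg z\<bar> < pi - \<theta> \<and> cmod z > r}"

text \<open>Principal square root; csqrt has nonnegative real part (positive off the negative real axis).\<close>

definition zeta1 :: "real \<Rightarrow> real \<Rightarrow> complex \<Rightarrow> complex" where
  "zeta1 a \<beta> lam = (2 * lam + of_real (a * (1 + \<beta>^2/2))
      + csqrt (of_real ((a * (1 + \<beta>^2/2))^2) - 2 * lam^2 * of_real (\<beta>^2)))
      / of_real (2 * (1 + \<beta>^2/2))"

definition zeta2 :: "real \<Rightarrow> real \<Rightarrow> complex \<Rightarrow> complex" where
  "zeta2 a \<beta> lam = (2 * lam + of_real (a * (1 + \<beta>^2/2))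
      - csqrt (of_real ((a * (1 + \<beta>^2/2))^2) - 2 * lam^2 * of_real (\<beta>^2)))
      / of_real (2 * (1 + \<beta>^2/2))"

definition eta :: "real \<Rightarrow> real \<Rightarrow> real" where
  "eta a \<beta> = a * (1 + \<beta>^2/2) / (sqrt 2 * \<bar>\<beta>\<bar>)"

definition Aform :: "real \<Rightarrow> real \<Rightarrow> complex \<Rightarrow> real \<Rightarrow> complex" where
  "Aform a \<beta> lam A =
     (let B = csqrt (lam + of_real a + of_real (A^2));
          L1 = csqrt (of_real (A^2) + zeta1 a \<beta> lam);
          L2 = csqrt (of_real (A^2) + zeta2 a \<beta> lam)
      in B^3 * (L1 + L2) - of_real (A^2) * B^2 - of_real (A^2) * L1 * L2)"

definition Aa :: "real \<Rightarrow> real \<Rightarrow> complex \<Rightarrow> real^'n \<Rightarrow> complex" where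
  "Aa a \<beta> lam \<xi> =
     (if lam = complex_of_real (eta a \<beta>)
      then Lim (at lam) (\<lambda>mu. Aform a \<beta> mu (norm \<xi>))
      else Aform a \<beta> lam (norm \<xi>))"

end

theory Submission
  imports Defs
begin

(* With X = |xi'|^2 and mu = lambda + a we have B^2 = mu + X and L_j^2 = X + z_j, hence
     A_a = mu B (L_1 + L_2) - X (B - L_1) (B - L_2),
     (B^2 - L_1^2) (B^2 - L_2^2) = (mu - z_1) (mu - z_2) = kappa lambda mu,
   where kappa = beta^2 / (2 + beta^2).  The three radicands lie in one half-plane which csqrt
   maps into a quarter-plane (for Re lambda <= 0 this uses tan theta > |beta| / sqrt 2), so
   B, L_1, L_2 pairwise form angles of at most pi/2.  Hence |B - L_j| <= |B + L_j| and
   |(B - L_1) (B - L_2)|^2 <= kappa |lambda| |mu|, while the geometry of the sector bounds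
   |mu B (L_1 + L_2)| below by sin theta X sqrt (|lambda| |mu|) and by (a sin theta)^2.
   As sqrt kappa < sin theta is again equivalent to tan theta > |beta| / sqrt 2,
     |A_a| >= (1 - sqrt kappa / sin theta) |mu B (L_1 + L_2)|
           >= a^2 sin theta (sin theta - sqrt kappa).
   At lambda = eta the limit defining A_a is just the value, A_a being continuous there. *)

lemma Re_ge_abs_Im_of_rotation:
  fixes e w :: complex
  assumes e: "\<bar>Im e\<bar> < Re e" and we: "0 \<le> Re (w * e)" and w2: "0 \<le> Re (w\<^sup>2)"
  shows "\<bar>Im w\<bar> \<le> Re w"
proof -
  have "(Im w)\<^sup>2 \<le> (Re w)\<^sup>2" using w2 by (simp add: power2_eq_square)
  hence sq: "\<bar>Im w\<bar> \<le> \<bar>Re w\<bar>" by (simp add: abs_le_square_iff)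
  have "0 \<le> Re w"
  proof (rule ccontr)
    assume neg: "\<not> 0 \<le> Re w"
    have "Re (w * e) \<le> Re w * Re e + \<bar>Im w\<bar> * \<bar>Im e\<bar>"
      using abs_ge_minus_self[of "Im w * Im e"] by (simp add: abs_mult)
    also have "\<dots> \<le> Re w * (Re e - \<bar>Im e\<bar>)"
      using sq neg mult_right_mono[OF sq, of "\<bar>Im e\<bar>"] by (simp add: algebra_simps)
    also have "\<dots> < 0" using neg e by (simp add: mult_neg_pos)
    finally show False using we by simp
  qed
  with sq show ?thesis by simp
qed

lemma Re_mult_cnj_nonneg_of_quadrant:
  fixes z w :: complex
  assumes "\<bar>Im z\<bar> \<le> Re z" "\<bar>Im w\<bar> \<le> Re w"
  shows "0 \<le> Re (z * cnj w)"
proof -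
  have "\<bar>Im z\<bar> * \<bar>Im w\<bar> \<le> Re z * Re w" using assms by (intro mult_mono) auto
  moreover have "- (\<bar>Im z\<bar> * \<bar>Im w\<bar>) \<le> Im z * Im w"
    using abs_ge_minus_self[of "Im z * Im w"] by (simp add: abs_mult)
  ultimately show ?thesis by simp
qed

lemma Re_csqrt_mult_cnj_csqrt_nonneg_halfplane:
  fixes g p q :: complex
  assumes g: "0 < Re g" and p: "0 \<le> Re (cnj g * p)" and q: "0 \<le> Re (cnj g * q)"
  shows "0 \<le> Re (csqrt p * cnj (csqrt q))"
proof -
  \<comment> \<open>multiplying by \<open>cnj (csqrt g)\<close> turns the image of the half-plane into \<open>{w. \<bar>Im w\<bar> \<le> Re w}\<close>\<close>
  define e where "e = csqrt g"
  have "0 < Re (e * e)" using g power2_csqrt[of g] unfolding e_def power2_eq_square by simp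
  hence "(Im e)\<^sup>2 < (Re e)\<^sup>2" by (simp add: power2_eq_square)
  hence "\<bar>Im e\<bar> < \<bar>Re e\<bar>" by (metis abs_le_square_iff not_le)
  hence e: "\<bar>Im e\<bar> < Re e" using Re_csqrt[of g] unfolding e_def by simp
  have rot: "\<bar>Im (cnj e * csqrt w)\<bar> \<le> Re (cnj e * csqrt w)" if "0 \<le> Re (cnj g * w)" for w
  proof (rule Re_ge_abs_Im_of_rotation[OF e])
    have scale: "cnj e * csqrt w * e = of_real ((cmod e)\<^sup>2) * csqrt w"
      by (simp only: complex_norm_square mult_ac)
    show "0 \<le> Re (cnj e * csqrt w * e)" unfolding scale using Re_csqrt[of w] by (simp del: csqrt.simps)
    have "(cnj e * csqrt w)\<^sup>2 = cnj g * w"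
      unfolding e_def by (simp add: power_mult_distrib flip: complex_cnj_power)
    thus "0 \<le> Re ((cnj e * csqrt w)\<^sup>2)" using that by simp
  qed
  have "cnj e * csqrt p * cnj (cnj e * csqrt q) = of_real ((cmod e)\<^sup>2) * (csqrt p * cnj (csqrt q))"
    by (simp only: complex_norm_square complex_cnj_mult complex_cnj_cnj mult_ac)
  hence "0 \<le> Re (of_real ((cmod e)\<^sup>2) * (csqrt p * cnj (csqrt q)))"
    using Re_mult_cnj_nonneg_of_quadrant[OF rot[OF p] rot[OF q]] by (simp only:)
  hence "0 \<le> (cmod e)\<^sup>2 * Re (csqrt p * cnj (csqrt q))" by (simp del: csqrt.simps)
  moreover have "0 < cmod e" using e by auto
  ultimately show ?thesis by (simp add: zero_le_mult_iff)
qed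

(* csqrt halves arguments, so it maps each of these regions into a quarter-plane. *)
lemma Re_csqrt_mult_cnj_csqrt_nonneg:
  fixes p q :: complex and S :: "complex set"
  assumes "(\<exists>g. 0 < Re g \<and> (\<forall>w\<in>S. 0 \<le> Re (cnj g * w))) \<or> (\<forall>w\<in>S. 0 \<le> Im w) \<or> (\<forall>w\<in>S. Im w < 0)"
    and "p \<in> S" "q \<in> S"
  shows "0 \<le> Re (csqrt p * cnj (csqrt q))"
  using assms
proof (elim disjE exE conjE)
  show "0 \<le> Re (csqrt p * cnj (csqrt q))" if "0 < Re g" "\<forall>w\<in>S. 0 \<le> Re (cnj g * w)" for g
    using that assms(2,3) by (intro Re_csqrt_mult_cnj_csqrt_nonneg_halfplane) auto
next
  assume "\<forall>w\<in>S. 0 \<le> Im w"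
  hence "0 \<le> Im (csqrt p)" "0 \<le> Im (csqrt q)"
    using assms(2,3) by (auto simp del: csqrt.simps simp: csqrt.simps(2) complex_Re_le_cmod)
  thus ?thesis using Re_csqrt[of p] Re_csqrt[of q] by simp
next
  assume "\<forall>w\<in>S. Im w < 0"
  hence "Im (csqrt p) \<le> 0" "Im (csqrt q) \<le> 0"
    using assms(2,3) by (auto simp del: csqrt.simps simp: csqrt.simps(2) complex_Re_le_cmod)
  thus ?thesis using Re_csqrt[of p] Re_csqrt[of q] by (simp add: mult_nonpos_nonpos)
qed

lemma norm_add_sq_ge_of_Re_mult_cnj_nonneg:
  fixes u v :: complex
  assumes "0 \<le> Re (u * cnj v)"
  shows "(cmod u)\<^sup>2 + (cmod v)\<^sup>2 \<le> (cmod (u + v))\<^sup>2"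
  using assms unfolding cmod_power2 by (simp add: power2_eq_square algebra_simps)

lemma norm_diff_le_norm_add_of_Re_mult_cnj_nonneg:
  fixes u v :: complex
  assumes "0 \<le> Re (u * cnj v)"
  shows "cmod (u - v) \<le> cmod (u + v)"
proof -
  have "(cmod (u - v))\<^sup>2 \<le> (cmod (u + v))\<^sup>2"
    using assms unfolding cmod_power2 by (simp add: power2_eq_square algebra_simps)
  thus ?thesis by (rule power2_le_imp_le) simp
qed

(* For 0 < theta < pi/2 this is the closure of sector theta 0, i.e. |Arg v| <= pi - theta or v = 0. *)
definition closed_sector :: "real \<Rightarrow> complex set" where
  "closed_sector \<theta> = {v. 0 \<le> Re v * sin \<theta> + \<bar>Im v\<bar> * cos \<theta>}"

lemma sector_subset_closed_sector:
  assumes "0 < \<theta>" "\<theta> < pi/2"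
  shows "sector \<theta> r \<subseteq> closed_sector \<theta>"
proof
  fix v assume v: "v \<in> sector \<theta> r"
  define \<phi> where "\<phi> = Arg v"
  have v0: "v \<noteq> 0" and ph: "\<bar>\<phi>\<bar> < pi - \<theta>" using v unfolding sector_def \<phi>_def by auto
  have re: "Re v = cmod v * cos \<phi>" and im: "Im v = cmod v * sin \<phi>"
    unfolding \<phi>_def using cos_Arg[OF v0] sin_Arg[OF v0] v0 by auto
  have "\<bar>sin \<phi>\<bar> = sin \<bar>\<phi>\<bar>"
    using ph assms sin_ge_zero[of "\<bar>\<phi>\<bar>"] by (cases "0 \<le> \<phi>") auto
  moreover have "0 < sin (\<bar>\<phi>\<bar> + \<theta>)" using ph assms by (intro sin_gt_zero) auto
  ultimately have "0 < cos \<phi> * sin \<theta> + \<bar>sin \<phi>\<bar> * cos \<theta>" by (simp add: sin_add)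
  hence "0 \<le> cmod v * (cos \<phi> * sin \<theta> + \<bar>sin \<phi>\<bar> * cos \<theta>)" by simp
  also have "\<dots> = Re v * sin \<theta> + \<bar>Im v\<bar> * cos \<theta>"
    unfolding re im by (simp add: abs_mult algebra_simps)
  finally show "v \<in> closed_sector \<theta>" unfolding closed_sector_def by simp
qed

lemma closed_sector_Re_nonpos:
  assumes "v \<in> closed_sector \<theta>" "Re v \<le> 0" "0 \<le> sin \<theta>"
  shows "(Re v * sin \<theta>)\<^sup>2 \<le> (Im v * cos \<theta>)\<^sup>2"
proof -
  have "- Re v * sin \<theta> \<le> \<bar>Im v\<bar> * cos \<theta>" using assms(1) unfolding closed_sector_def by simp
  moreover have "0 \<le> - Re v * sin \<theta>" using assms(2,3) by (simp add: mult_nonpos_nonneg)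
  ultimately have "(- Re v * sin \<theta>)\<^sup>2 \<le> (\<bar>Im v\<bar> * cos \<theta>)\<^sup>2" by (rule power_mono)
  thus ?thesis by (simp add: power_mult_distrib)
qed

lemma norm_add_of_real_ge:
  assumes \<theta>: "0 < \<theta>" "\<theta> < pi/2" and v: "v \<in> closed_sector \<theta>" and R: "0 \<le> R"
  shows "R * sin \<theta> \<le> cmod (v + of_real R)"
proof (cases "0 \<le> Re v")
  case True
  have "R * sin \<theta> \<le> R" using R by (simp add: mult_left_le)
  also have "\<dots> \<le> Re (v + of_real R)" using True by simp
  also have "\<dots> \<le> cmod (v + of_real R)" by (rule complex_Re_le_cmod)
  finally show ?thesis .
next
  case False
  have co: "0 < cos \<theta>" and s: "0 < sin \<theta>" using \<theta> by (auto intro: cos_gt_zero sin_gt_zero)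
  have h: "(Re v * sin \<theta>)\<^sup>2 \<le> (Im v * cos \<theta>)\<^sup>2"
    using closed_sector_Re_nonpos[OF v] False s by simp
  have sin2: "(sin \<theta>)\<^sup>2 = 1 - (cos \<theta>)\<^sup>2" by (rule sin_squared_eq)
  have "(cos \<theta>)\<^sup>2 * ((Re v + R)\<^sup>2 + (Im v)\<^sup>2 - (R * sin \<theta>)\<^sup>2)
      = (Re v + (cos \<theta>)\<^sup>2 * R)\<^sup>2 + ((Im v * cos \<theta>)\<^sup>2 - (Re v * sin \<theta>)\<^sup>2)"
    unfolding power_mult_distrib sin2 by (simp add: power2_eq_square algebra_simps)
  also have "\<dots> \<ge> 0" using h by simp
  finally have "(R * sin \<theta>)\<^sup>2 \<le> (cmod (v + of_real R))\<^sup>2"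
    using co by (simp add: zero_le_mult_iff cmod_power2)
  thus ?thesis by (rule power2_le_imp_le) simp
qed

lemma norm_mult_add_of_real_ge:
  assumes \<theta>: "0 < \<theta>" "\<theta> < pi/2" and lam: "lam \<in> closed_sector \<theta>" and a: "0 \<le> a" and X: "0 \<le> X"
  shows "sin \<theta> * X * cmod lam \<le> 2 * (cmod (lam + of_real a) * cmod (lam + of_real (a + X)))"
proof (cases "0 \<le> Re lam")
  case True
  have "(cmod lam)\<^sup>2 \<le> (cmod (lam + of_real a))\<^sup>2"
    unfolding cmod_power2 using True a by (simp add: power2_eq_square algebra_simps)
  hence "cmod lam \<le> cmod (lam + of_real a)" by (rule power2_le_imp_le) simp
  moreover have "X \<le> cmod (lam + of_real (a + X))"
    using True a complex_Re_le_cmod[of "lam + of_real (a + X)"] by simp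
  ultimately have "X * cmod lam \<le> cmod (lam + of_real a) * cmod (lam + of_real (a + X))"
    using X by (subst mult.commute) (intro mult_mono, auto)
  moreover have "sin \<theta> * X * cmod lam \<le> X * cmod lam"
    using X mult_right_mono[OF sin_le_one, of "X * cmod lam" \<theta>] by (simp add: mult.assoc)
  moreover have "0 \<le> cmod (lam + of_real a) * cmod (lam + of_real (a + X))" by simp
  ultimately show ?thesis by linarith
next
  case False
  have s: "0 < sin \<theta>" using \<theta> by (auto intro: sin_gt_zero)
  have "(cmod lam * sin \<theta>)\<^sup>2 = (Re lam * sin \<theta>)\<^sup>2 + (Im lam)\<^sup>2 * (sin \<theta>)\<^sup>2"
    by (simp add: cmod_power2 power_mult_distrib algebra_simps)
  also have "\<dots> \<le> (Im lam * cos \<theta>)\<^sup>2 + (Im lam)\<^sup>2 * (sin \<theta>)\<^sup>2"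
    using closed_sector_Re_nonpos[OF lam] False s by simp
  also have "\<dots> = \<bar>Im lam\<bar>\<^sup>2" by (simp add: power_mult_distrib flip: distrib_left)
  finally have ls: "cmod lam * sin \<theta> \<le> \<bar>Im lam\<bar>" by (rule power2_le_imp_le) simp
  define p where "p = cmod (lam + of_real a)"
  define q where "q = cmod (lam + of_real (a + X))"
  have p: "\<bar>Im lam\<bar> \<le> p" and q: "\<bar>Im lam\<bar> \<le> q"
    unfolding p_def q_def using abs_Im_le_cmod by (metis Im_complex_of_real add.right_neutral plus_complex.sel(2))+
  have "X = cmod ((lam + of_real (a + X)) - (lam + of_real a))" using X by simp
  also have "\<dots> \<le> q + p" unfolding p_def q_def by (rule norm_triangle_ineq4)
  finally have pq: "X \<le> p + q" by simp
  have "sin \<theta> * X * cmod lam \<le> \<bar>Im lam\<bar> * X" using mult_left_mono[OF ls X] by (simp add: mult_ac)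
  also have "\<dots> \<le> \<bar>Im lam\<bar> * (p + q)" using pq by (simp add: mult_left_mono)
  also have "\<dots> \<le> 2 * (p * q)"
    using mult_right_mono[OF p, of q] mult_right_mono[OF q, of p] unfolding p_def q_def
    by (simp add: distrib_left mult.commute)
  finally show ?thesis unfolding p_def q_def .
qed

lemma zeta_sum:
  fixes a \<beta> :: real and lam :: complex
  defines "c \<equiv> 1 + \<beta>\<^sup>2 / 2"
  shows "zeta1 a \<beta> lam + zeta2 a \<beta> lam = (2 * lam + of_real (a * c)) / of_real c"
proof -
  have "0 < c" unfolding c_def by (auto intro: add_pos_nonneg)
  thus ?thesis unfolding zeta1_def zeta2_def c_def[symmetric] by (simp add: field_simps)
qed

lemma zeta_factor:
  fixes a \<beta> :: real and lam :: complex
  shows "(lam + of_real a - zeta1 a \<beta> lam) * (lam + of_real a - zeta2 a \<beta> lam)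
    = of_real (\<beta>\<^sup>2 / (2 + \<beta>\<^sup>2)) * lam * (lam + of_real a)"
proof -
  define C where "C = complex_of_real (1 + \<beta>\<^sup>2 / 2)"
  \<comment> \<open>writing \<open>\<beta>\<^sup>2 = 2 C - 2\<close> makes the numerator identity below polynomial in \<open>C\<close>\<close>
  define w where "w = csqrt ((of_real a * C)\<^sup>2 - 2 * lam\<^sup>2 * (2 * C - 2))"
  define \<mu> where "\<mu> = lam + of_real a"
  have "0 < 1 + \<beta>\<^sup>2 / 2" by (auto intro: add_pos_nonneg)
  hence C: "C \<noteq> 0" unfolding C_def by (simp only: of_real_eq_0_iff)
  have z: "zeta1 a \<beta> lam = (2 * lam + of_real a * C + w) / (2 * C)"
          "zeta2 a \<beta> lam = (2 * lam + of_real a * C - w) / (2 * C)"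
    unfolding zeta1_def zeta2_def w_def C_def by (simp_all add: field_simps)
  have "(\<mu> - zeta1 a \<beta> lam) * (\<mu> - zeta2 a \<beta> lam)
      = ((2 * C * \<mu> - (2 * lam + of_real a * C))\<^sup>2 - w\<^sup>2) / (4 * C\<^sup>2)"
    unfolding z using C by (simp add: field_simps power2_eq_square)
  also have "(2 * C * \<mu> - (2 * lam + of_real a * C))\<^sup>2 - w\<^sup>2 = 4 * C * (C - 1) * lam * \<mu>"
    unfolding w_def power2_csqrt \<mu>_def by algebra
  also have "4 * C * (C - 1) * lam * \<mu> / (4 * C\<^sup>2) = (C - 1) / C * lam * \<mu>"
    using C by (simp add: field_simps power2_eq_square)
  also have "(C - 1) / C = of_real (\<beta>\<^sup>2 / (2 + \<beta>\<^sup>2))"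
    unfolding C_def by (simp add: field_simps)
  finally show ?thesis unfolding \<mu>_def .
qed

lemma abs_Re_cnj_mult_csqrt_le:
  fixes d \<beta> :: real and lam :: complex
  shows "\<bar>Re (cnj lam * csqrt (of_real (d\<^sup>2) - 2 * lam\<^sup>2 * of_real (\<beta>\<^sup>2)))\<bar> \<le> \<bar>d * Re lam\<bar>"
proof -
  define W where "W = of_real (d\<^sup>2) - 2 * lam\<^sup>2 * of_real (\<beta>\<^sup>2)"
  define m where "m = Re (cnj lam * csqrt W)"
  have re_sq: "(Re v)\<^sup>2 = ((cmod v)\<^sup>2 + Re (v\<^sup>2)) / 2" for v :: complex
    unfolding cmod_power2 by (simp add: power2_eq_square)
  have "m\<^sup>2 = ((cmod (cnj lam * csqrt W))\<^sup>2 + Re ((cnj lam * csqrt W)\<^sup>2)) / 2"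
    unfolding m_def by (rule re_sq)
  also have "\<dots> = ((cmod lam)\<^sup>2 * cmod W + Re ((cnj lam)\<^sup>2 * W)) / 2"
    by (simp add: norm_mult power_mult_distrib del: csqrt.simps)
  finally have m2: "m\<^sup>2 = ((cmod lam)\<^sup>2 * cmod W + Re ((cnj lam)\<^sup>2 * W)) / 2" .
  have "cmod W \<le> d\<^sup>2 + 2 * \<beta>\<^sup>2 * (cmod lam)\<^sup>2"
    unfolding W_def using norm_triangle_ineq4[of "of_real (d\<^sup>2)" "2 * lam\<^sup>2 * of_real (\<beta>\<^sup>2)"]
    by (simp add: norm_mult norm_power mult_ac)
  hence "m\<^sup>2 \<le> ((cmod lam)\<^sup>2 * (d\<^sup>2 + 2 * \<beta>\<^sup>2 * (cmod lam)\<^sup>2) + Re ((cnj lam)\<^sup>2 * W)) / 2"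
    unfolding m2 by (simp add: mult_left_mono)
  also have "\<dots> = (d * Re lam)\<^sup>2"
    unfolding W_def cmod_power2 by (simp add: power2_eq_square algebra_simps)
  finally show ?thesis unfolding m_def W_def by (simp add: abs_le_square_iff)
qed

lemma abs_Im_csqrt_less:
  fixes d \<beta> :: real and lam :: complex
  assumes d: "d \<noteq> 0" and y: "Im lam \<noteq> 0" and K: "\<beta>\<^sup>2 * (Re lam)\<^sup>2 \<le> 2 * (Im lam)\<^sup>2"
  shows "\<bar>Im (csqrt (of_real (d\<^sup>2) - 2 * lam\<^sup>2 * of_real (\<beta>\<^sup>2)))\<bar> < \<bar>2 * Im lam\<bar>"
proof -
  define W where "W = of_real (d\<^sup>2) - 2 * lam\<^sup>2 * of_real (\<beta>\<^sup>2)"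
  define x where "x = Re lam"
  define y where "y = Im lam"
  have ReW: "Re W = d\<^sup>2 - 2 * (\<beta>\<^sup>2 * x\<^sup>2) + 2 * (\<beta>\<^sup>2 * y\<^sup>2)" and ImW: "Im W = - 4 * \<beta>\<^sup>2 * x * y"
    unfolding W_def x_def y_def by (simp_all add: power2_eq_square algebra_simps)
  have K': "\<beta>\<^sup>2 * x\<^sup>2 \<le> 2 * y\<^sup>2" and y2: "0 < y\<^sup>2" and d2: "0 < d\<^sup>2"
    using K y d unfolding x_def y_def by simp_all
  have "0 \<le> \<beta>\<^sup>2 * y\<^sup>2" by simp
  hence pos: "0 < 8 * y\<^sup>2 + Re W" unfolding ReW using y2 K' d2 by linarith
  have "(8 * y\<^sup>2 + Re W)\<^sup>2 - (cmod W)\<^sup>2 = 16 * y\<^sup>2 * (d\<^sup>2 + (2 + \<beta>\<^sup>2) * (2 * y\<^sup>2 - \<beta>\<^sup>2 * x\<^sup>2))"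
    unfolding cmod_power2 ReW ImW by (simp add: power2_eq_square algebra_simps)
  also have "\<dots> > 0" using y2 K' d2 by (simp add: add_pos_nonneg)
  finally have "cmod W < 8 * y\<^sup>2 + Re W" using pos by (simp add: power_less_imp_less_base)
  moreover have "(Im (csqrt W))\<^sup>2 = ((cmod (csqrt W))\<^sup>2 - Re ((csqrt W)\<^sup>2)) / 2"
    unfolding cmod_power2 by (simp add: power2_eq_square del: csqrt.simps)
  hence "(Im (csqrt W))\<^sup>2 = (cmod W - Re W) / 2" by simp
  ultimately have "(Im (csqrt W))\<^sup>2 < (2 * y)\<^sup>2" by (simp add: power2_eq_square)
  thus ?thesis unfolding W_def y_def by (metis abs_le_square_iff not_le)
qed

lemma Re_cnj_mult_zeta_nonneg:
  fixes a \<beta> :: real and lam :: complex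
  assumes lam: "0 \<le> Re lam" and a: "0 \<le> a"
  shows "0 \<le> Re (cnj lam * zeta1 a \<beta> lam)" and "0 \<le> Re (cnj lam * zeta2 a \<beta> lam)"
proof -
  define c where "c = 1 + \<beta>\<^sup>2 / 2"
  define w where "w = csqrt (of_real ((a * c)\<^sup>2) - 2 * lam\<^sup>2 * of_real (\<beta>\<^sup>2))"
  have c: "0 < c" unfolding c_def by (auto intro: add_pos_nonneg)
  have "\<bar>Re (cnj lam * w)\<bar> \<le> a * c * Re lam"
    using abs_Re_cnj_mult_csqrt_le[of lam "a * c" \<beta>] lam a c unfolding w_def by (simp add: abs_mult)
  moreover have "a * c * Re lam \<le> Re (cnj lam * (2 * lam + of_real (a * c)))"
    by (simp add: power2_eq_square algebra_simps)
  moreover have "Re (cnj lam * zeta1 a \<beta> lam)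
      = (Re (cnj lam * (2 * lam + of_real (a * c))) + Re (cnj lam * w)) / (2 * c)"
    and "Re (cnj lam * zeta2 a \<beta> lam)
      = (Re (cnj lam * (2 * lam + of_real (a * c))) - Re (cnj lam * w)) / (2 * c)"
    unfolding zeta1_def zeta2_def c_def[symmetric] w_def[symmetric]
    by (simp_all add: algebra_simps del: csqrt.simps)
  ultimately show "0 \<le> Re (cnj lam * zeta1 a \<beta> lam)" and "0 \<le> Re (cnj lam * zeta2 a \<beta> lam)"
    using c by (simp_all add: abs_le_iff)
qed

lemma Im_zeta_same_sign:
  fixes a \<beta> :: real and lam :: complex
  assumes a: "0 < a" and y: "Im lam \<noteq> 0" and K: "\<beta>\<^sup>2 * (Re lam)\<^sup>2 \<le> 2 * (Im lam)\<^sup>2"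
  shows "0 < Im lam * Im (zeta1 a \<beta> lam)" and "0 < Im lam * Im (zeta2 a \<beta> lam)"
proof -
  define c where "c = 1 + \<beta>\<^sup>2 / 2"
  define w where "w = csqrt (of_real ((a * c)\<^sup>2) - 2 * lam\<^sup>2 * of_real (\<beta>\<^sup>2))"
  have c: "0 < c" unfolding c_def by (auto intro: add_pos_nonneg)
  have "\<bar>Im w\<bar> < \<bar>2 * Im lam\<bar>" unfolding w_def using a c y K by (intro abs_Im_csqrt_less) auto
  hence "\<bar>Im lam\<bar> * \<bar>Im w\<bar> < \<bar>Im lam\<bar> * \<bar>2 * Im lam\<bar>"
    by (rule mult_strict_left_mono) (use y in simp)
  hence t: "\<bar>Im lam * Im w\<bar> < 2 * (Im lam * Im lam)" by (simp add: abs_mult)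
  have "0 < Im lam * (2 * Im lam + Im w)" "0 < Im lam * (2 * Im lam - Im w)"
    using t unfolding abs_less_iff by (simp_all add: algebra_simps)
  moreover have "Im (zeta1 a \<beta> lam) = (2 * Im lam + Im w) / (2 * c)"
    and "Im (zeta2 a \<beta> lam) = (2 * Im lam - Im w) / (2 * c)"
    unfolding zeta1_def zeta2_def c_def[symmetric] w_def[symmetric] by (simp_all del: csqrt.simps)
  ultimately show "0 < Im lam * Im (zeta1 a \<beta> lam)" and "0 < Im lam * Im (zeta2 a \<beta> lam)"
    using c by (simp_all add: times_divide_eq_right del: csqrt.simps)
qed

lemma zeta_shifts_common_halfplane:
  fixes a \<beta> X \<theta> :: real and lam :: complex
  assumes \<theta>: "0 < \<theta>" "\<theta> < pi/2" and K: "\<beta>\<^sup>2 * (cos \<theta>)\<^sup>2 < 2 * (sin \<theta>)\<^sup>2"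
    and a: "0 < a" and X: "0 \<le> X" and lam: "lam \<in> closed_sector \<theta>" "lam \<noteq> 0"
  defines "S \<equiv> {lam + of_real a + of_real X, of_real X + zeta1 a \<beta> lam, of_real X + zeta2 a \<beta> lam}"
  shows "(\<exists>g. 0 < Re g \<and> (\<forall>w\<in>S. 0 \<le> Re (cnj g * w))) \<or> (\<forall>w\<in>S. 0 \<le> Im w) \<or> (\<forall>w\<in>S. Im w < 0)"
proof (cases "0 < Re lam")
  case True
  have "0 \<le> Re (cnj lam * (lam + of_real a + of_real X))"
    using True a X by (simp add: power2_eq_square algebra_simps)
  moreover have "0 \<le> Re (cnj lam * (of_real X + zeta1 a \<beta> lam))"
    and "0 \<le> Re (cnj lam * (of_real X + zeta2 a \<beta> lam))"
    using Re_cnj_mult_zeta_nonneg[of lam a \<beta>] True a X by (simp_all add: algebra_simps)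
  ultimately show ?thesis unfolding S_def using True by blast
next
  case False
  have s: "0 < sin \<theta>" and co: "0 < cos \<theta>" using \<theta> by (auto intro: sin_gt_zero cos_gt_zero)
  have y: "Im lam \<noteq> 0"
  proof
    assume "Im lam = 0"
    hence "0 \<le> Re lam * sin \<theta>" using lam(1) unfolding closed_sector_def by simp
    hence "Re lam = 0" using False s by (simp add: zero_le_mult_iff)
    thus False using lam(2) \<open>Im lam = 0\<close> by (simp add: complex_eq_iff)
  qed
  have "(cos \<theta>)\<^sup>2 * (\<beta>\<^sup>2 * (Re lam)\<^sup>2) \<le> 2 * (sin \<theta>)\<^sup>2 * (Re lam)\<^sup>2"
    using K by (simp add: mult_right_mono mult.assoc[symmetric] mult.commute[of "(cos \<theta>)\<^sup>2"])
  also have "\<dots> \<le> (cos \<theta>)\<^sup>2 * (2 * (Im lam)\<^sup>2)"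
    using closed_sector_Re_nonpos[OF lam(1)] False s by (simp add: power_mult_distrib algebra_simps)
  finally have "\<beta>\<^sup>2 * (Re lam)\<^sup>2 \<le> 2 * (Im lam)\<^sup>2" using co by simp
  note sign = Im_zeta_same_sign[OF a y this]
  show ?thesis
  proof (cases "0 < Im lam")
    case True
    thus ?thesis using sign unfolding S_def by (auto simp: zero_less_mult_iff)
  next
    case False
    thus ?thesis using sign y unfolding S_def by (auto simp: zero_less_mult_iff)
  qed
qed

lemma norm_add_zeta_roots_sq_ge:
  fixes a \<beta> X \<theta> :: real and lam L1 L2 :: complex
  assumes \<theta>: "0 < \<theta>" "\<theta> < pi/2" and lam: "lam \<in> closed_sector \<theta>" and a: "0 \<le> a" and X: "0 \<le> X"
    and L1: "L1\<^sup>2 = of_real X + zeta1 a \<beta> lam" and L2: "L2\<^sup>2 = of_real X + zeta2 a \<beta> lam"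
    and acute: "0 \<le> Re (L1 * cnj L2)"
  shows "(2 * X + a) * sin \<theta> \<le> (cmod (L1 + L2))\<^sup>2"
proof -
  define c where "c = 1 + \<beta>\<^sup>2 / 2"
  have c: "0 < c" unfolding c_def by (auto intro: add_pos_nonneg)
  have "2 * lam \<in> closed_sector \<theta>" using lam unfolding closed_sector_def by (simp add: abs_mult)
  hence "c * (2 * X + a) * sin \<theta> \<le> cmod (2 * lam + of_real (c * (2 * X + a)))"
    using c a X by (intro norm_add_of_real_ge[OF \<theta>]) auto
  also have "2 * lam + of_real (c * (2 * X + a)) = of_real c * (L1\<^sup>2 + L2\<^sup>2)"
    unfolding L1 L2 using zeta_sum[of a \<beta> lam] c unfolding c_def[symmetric]
    by (simp add: field_simps)
  also have "cmod (of_real c * (L1\<^sup>2 + L2\<^sup>2)) \<le> c * ((cmod L1)\<^sup>2 + (cmod L2)\<^sup>2)"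
    using c norm_triangle_ineq[of "L1\<^sup>2" "L2\<^sup>2"] by (simp add: norm_mult norm_power)
  also have "\<dots> \<le> c * (cmod (L1 + L2))\<^sup>2"
    using norm_add_sq_ge_of_Re_mult_cnj_nonneg[OF acute] c by simp
  finally show ?thesis using c by (simp add: mult.assoc)
qed

lemma norm_diff_zeta_roots_sq_le:
  fixes a \<beta> X :: real and lam B L1 L2 :: complex
  assumes B: "B\<^sup>2 = lam + of_real a + of_real X"
    and L1: "L1\<^sup>2 = of_real X + zeta1 a \<beta> lam" and L2: "L2\<^sup>2 = of_real X + zeta2 a \<beta> lam"
    and acute1: "0 \<le> Re (B * cnj L1)" and acute2: "0 \<le> Re (B * cnj L2)"
  shows "(cmod ((B - L1) * (B - L2)))\<^sup>2 \<le> \<beta>\<^sup>2 / (2 + \<beta>\<^sup>2) * cmod (lam + of_real a) * cmod lam"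
proof -
  define D where "D = cmod ((B - L1) * (B - L2))"
  define E where "E = cmod ((B + L1) * (B + L2))"
  have "D \<le> E" unfolding D_def E_def norm_mult
    using norm_diff_le_norm_add_of_Re_mult_cnj_nonneg[OF acute1]
      norm_diff_le_norm_add_of_Re_mult_cnj_nonneg[OF acute2]
    by (intro mult_mono) auto
  hence "D\<^sup>2 \<le> D * E" unfolding D_def power2_eq_square by (simp add: mult_left_mono)
  also have "D * E = cmod ((B\<^sup>2 - L1\<^sup>2) * (B\<^sup>2 - L2\<^sup>2))"
    unfolding D_def E_def norm_mult[symmetric] by (simp add: power2_eq_square algebra_simps)
  also have "(B\<^sup>2 - L1\<^sup>2) * (B\<^sup>2 - L2\<^sup>2) = (lam + of_real a - zeta1 a \<beta> lam) * (lam + of_real a - zeta2 a \<beta> lam)"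
    unfolding B L1 L2 by (simp add: algebra_simps)
  also have "cmod \<dots> = \<beta>\<^sup>2 / (2 + \<beta>\<^sup>2) * cmod (lam + of_real a) * cmod lam"
    unfolding zeta_factor norm_mult norm_of_real by (simp add: mult_ac)
  finally show ?thesis unfolding D_def .
qed

lemma diff_ge_of_sq_bounds:
  fixes P Q R k s m :: real
  assumes s: "0 < s" and k: "0 \<le> k" "sqrt k \<le> s" and P: "0 \<le> P" "m \<le> P"
    and Q: "Q\<^sup>2 \<le> k * R" and R: "s\<^sup>2 * R \<le> P\<^sup>2"
  shows "m * (s - sqrt k) \<le> s * (P - Q)"
proof -
  have "(s * Q)\<^sup>2 \<le> s\<^sup>2 * (k * R)" using Q by (simp add: power_mult_distrib mult_left_mono)
  also have "\<dots> = k * (s\<^sup>2 * R)" by (simp add: mult_ac)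
  also have "\<dots> \<le> k * P\<^sup>2" using R k by (simp add: mult_left_mono)
  also have "\<dots> = (sqrt k * P)\<^sup>2" using k by (simp add: power_mult_distrib)
  finally have "s * Q \<le> sqrt k * P" by (rule power2_le_imp_le) (use k P in simp)
  hence "(s - sqrt k) * P \<le> s * (P - Q)" by (simp add: algebra_simps)
  moreover have "(s - sqrt k) * m \<le> (s - sqrt k) * P" using k P by (simp add: mult_left_mono)
  ultimately show ?thesis by (simp add: mult.commute)
qed

lemma sqrt_beta_ratio_less_sin:
  fixes \<beta> \<theta> :: real
  assumes s: "0 < sin \<theta>" and K: "\<beta>\<^sup>2 * (cos \<theta>)\<^sup>2 < 2 * (sin \<theta>)\<^sup>2"
  shows "sqrt (\<beta>\<^sup>2 / (2 + \<beta>\<^sup>2)) < sin \<theta>"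
proof -
  have "\<beta>\<^sup>2 * (1 - (sin \<theta>)\<^sup>2) < 2 * (sin \<theta>)\<^sup>2" using K by (simp add: cos_squared_eq)
  hence "\<beta>\<^sup>2 / (2 + \<beta>\<^sup>2) < (sin \<theta>)\<^sup>2" by (simp add: divide_less_eq add_pos_nonneg algebra_simps)
  hence "sqrt (\<beta>\<^sup>2 / (2 + \<beta>\<^sup>2)) < sqrt ((sin \<theta>)\<^sup>2)" by (rule real_sqrt_less_mono)
  thus ?thesis using s by simp
qed

lemma Aform_eq:
  fixes a \<beta> A :: real and lam :: complex
  defines "B \<equiv> csqrt (lam + of_real a + of_real (A\<^sup>2))"
    and "L1 \<equiv> csqrt (of_real (A\<^sup>2) + zeta1 a \<beta> lam)"
    and "L2 \<equiv> csqrt (of_real (A\<^sup>2) + zeta2 a \<beta> lam)"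
  shows "Aform a \<beta> lam A = (lam + of_real a) * B * (L1 + L2) - of_real (A\<^sup>2) * ((B - L1) * (B - L2))"
proof -
  have "B\<^sup>2 = lam + of_real a + of_real (A\<^sup>2)" unfolding B_def by simp
  moreover have "Aform a \<beta> lam A = B^3 * (L1 + L2) - of_real (A\<^sup>2) * B\<^sup>2 - of_real (A\<^sup>2) * L1 * L2"
    unfolding Aform_def Let_def B_def L1_def L2_def ..
  ultimately show ?thesis by algebra
qed

lemma norm_leading_term_ge:
  fixes a X \<theta> :: real and lam B L :: complex
  assumes \<theta>: "0 < \<theta>" "\<theta> < pi/2" and lam: "lam \<in> closed_sector \<theta>" and a: "0 \<le> a" and X: "0 \<le> X"
    and B: "(cmod B)\<^sup>2 = cmod (lam + of_real (a + X))" and L: "(2 * X + a) * sin \<theta> \<le> (cmod L)\<^sup>2"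
  defines "P \<equiv> cmod (lam + of_real a) * cmod B * cmod L"
  shows "(sin \<theta>)\<^sup>2 * (X\<^sup>2 * cmod (lam + of_real a) * cmod lam) \<le> P\<^sup>2"
    and "(a * sin \<theta>)\<^sup>2 \<le> P"
proof -
  define s where "s = sin \<theta>"
  define \<mu> where "\<mu> = lam + of_real a"
  have s: "0 < s" unfolding s_def using \<theta> by (auto intro: sin_gt_zero)
  have P2: "P\<^sup>2 = cmod \<mu> * (cmod \<mu> * cmod (lam + of_real (a + X))) * (cmod L)\<^sup>2"
    unfolding P_def \<mu>_def power_mult_distrib B by (simp add: power2_eq_square mult_ac)
  have "0 \<le> a * s" "0 \<le> 2 * X * s" "(2 * X + a) * s = 2 * X * s + a * s"
    using a X s by (simp_all add: distrib_right)
  hence L_ge: "2 * X * s \<le> (cmod L)\<^sup>2" "a * s \<le> (cmod L)\<^sup>2" using L unfolding s_def by linarith+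
  have "s * X * cmod lam / 2 \<le> cmod \<mu> * cmod (lam + of_real (a + X))"
    using norm_mult_add_of_real_ge[OF \<theta> lam, of a X] a X unfolding s_def \<mu>_def by simp
  hence "cmod \<mu> * (s * X * cmod lam / 2) * (2 * X * s) \<le> P\<^sup>2"
    unfolding P2 using L_ge s X by (intro mult_mono mult_left_mono) auto
  thus "(sin \<theta>)\<^sup>2 * (X\<^sup>2 * cmod (lam + of_real a) * cmod lam) \<le> P\<^sup>2"
    unfolding s_def \<mu>_def by (simp add: power2_eq_square mult_ac)
  have \<mu>_ge: "a * s \<le> cmod \<mu>" and \<mu>X_ge: "(a + X) * s \<le> cmod (lam + of_real (a + X))"
    using norm_add_of_real_ge[OF \<theta> lam, of a] norm_add_of_real_ge[OF \<theta> lam, of "a + X"] a X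
    unfolding s_def \<mu>_def by auto
  have "a * s \<le> (a + X) * s" using X s by (simp add: mult_right_mono)
  hence "a * s \<le> cmod (lam + of_real (a + X))" using \<mu>X_ge by linarith
  hence "(a * s) * ((a * s) * (a * s)) * (a * s) \<le> P\<^sup>2"
    unfolding P2 using \<mu>_ge L_ge a s by (intro mult_mono) auto
  hence "((a * s)\<^sup>2)\<^sup>2 \<le> P\<^sup>2" by (simp add: power2_eq_square mult_ac)
  thus "(a * sin \<theta>)\<^sup>2 \<le> P" unfolding s_def by (rule power2_le_imp_le) (simp add: P_def)
qed

lemma norm_Aform_ge:
  fixes a \<beta> A \<theta> :: real and lam :: complex
  assumes \<theta>: "0 < \<theta>" "\<theta> < pi/2" and K: "\<beta>\<^sup>2 * (cos \<theta>)\<^sup>2 < 2 * (sin \<theta>)\<^sup>2"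
    and a: "0 < a" and lam: "lam \<in> closed_sector \<theta>" "lam \<noteq> 0"
  shows "a\<^sup>2 * sin \<theta> * (sin \<theta> - sqrt (\<beta>\<^sup>2 / (2 + \<beta>\<^sup>2))) \<le> cmod (Aform a \<beta> lam A)"
proof -
  define s where "s = sin \<theta>"
  define \<kappa> where "\<kappa> = \<beta>\<^sup>2 / (2 + \<beta>\<^sup>2)"
  define X where "X = A\<^sup>2"
  define B where "B = csqrt (lam + of_real a + of_real X)"
  define L1 where "L1 = csqrt (of_real X + zeta1 a \<beta> lam)"
  define L2 where "L2 = csqrt (of_real X + zeta2 a \<beta> lam)"
  have s: "0 < s" unfolding s_def using \<theta> by (auto intro: sin_gt_zero)
  have X: "0 \<le> X" unfolding X_def by simp
  have \<kappa>: "0 \<le> \<kappa>" "sqrt \<kappa> \<le> s"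
    using sqrt_beta_ratio_less_sin[OF _ K] s unfolding \<kappa>_def s_def by auto
  have B2: "B\<^sup>2 = lam + of_real a + of_real X" and L1: "L1\<^sup>2 = of_real X + zeta1 a \<beta> lam"
    and L2: "L2\<^sup>2 = of_real X + zeta2 a \<beta> lam" unfolding B_def L1_def L2_def by simp_all
  note acute = Re_csqrt_mult_cnj_csqrt_nonneg[OF zeta_shifts_common_halfplane[OF \<theta> K a X lam]]
  have BL1: "0 \<le> Re (B * cnj L1)" unfolding B_def L1_def by (rule acute) simp_all
  have BL2: "0 \<le> Re (B * cnj L2)" unfolding B_def L2_def by (rule acute) simp_all
  have L12: "0 \<le> Re (L1 * cnj L2)" unfolding L1_def L2_def by (rule acute) simp_all
  define P where "P = cmod (lam + of_real a) * cmod B * cmod (L1 + L2)"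
  define Q where "Q = X * cmod ((B - L1) * (B - L2))"
  have "Aform a \<beta> lam A = (lam + of_real a) * B * (L1 + L2) - of_real X * ((B - L1) * (B - L2))"
    unfolding B_def L1_def L2_def X_def by (rule Aform_eq)
  hence PQ: "P - Q \<le> cmod (Aform a \<beta> lam A)"
    using norm_triangle_ineq2[of "(lam + of_real a) * B * (L1 + L2)" "of_real X * ((B - L1) * (B - L2))"] X
    unfolding P_def Q_def by (simp add: norm_mult)
  have Q: "Q\<^sup>2 \<le> \<kappa> * (X\<^sup>2 * cmod (lam + of_real a) * cmod lam)"
    using mult_left_mono[OF norm_diff_zeta_roots_sq_le[OF B2 L1 L2 BL1 BL2], of "X\<^sup>2"]
    unfolding Q_def \<kappa>_def by (simp add: power_mult_distrib mult_ac)
  have "(cmod B)\<^sup>2 = cmod (lam + of_real (a + X))"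
    unfolding norm_power[symmetric] B2 by (simp add: add.assoc)
  note P = norm_leading_term_ge[OF \<theta> lam(1) _ X this norm_add_zeta_roots_sq_ge[OF \<theta> lam(1) _ X L1 L2 L12]]
  have "(a * s)\<^sup>2 * (s - sqrt \<kappa>) \<le> s * (P - Q)"
    using diff_ge_of_sq_bounds[OF s \<kappa>] P Q a unfolding P_def s_def by simp
  also have "\<dots> \<le> s * cmod (Aform a \<beta> lam A)" using PQ s by simp
  finally have "s * (a\<^sup>2 * s * (s - sqrt \<kappa>)) \<le> s * cmod (Aform a \<beta> lam A)"
    by (simp add: power2_eq_square mult_ac)
  thus ?thesis using s unfolding s_def \<kappa>_def by simp
qed

lemma isCont_csqrt_0: "isCont csqrt 0"
proof -
  have "((\<lambda>z. sqrt (cmod z)) \<longlongrightarrow> sqrt (cmod (0::complex))) (at 0)"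
    by (intro tendsto_intros)
  hence "((\<lambda>z. cmod (csqrt z)) \<longlongrightarrow> 0) (at 0)" by simp
  hence "(csqrt \<longlongrightarrow> 0) (at 0)" by (rule tendsto_norm_zero_iff[THEN iffD1])
  thus ?thesis unfolding isCont_def by simp
qed

lemma isCont_Aform_eta:
  fixes a \<beta> A :: real
  assumes a: "0 < a" and \<beta>: "\<beta> \<noteq> 0"
  shows "isCont (\<lambda>mu. Aform a \<beta> mu A) (of_real (eta a \<beta>))"
proof -
  define c where "c = 1 + \<beta>\<^sup>2 / 2"
  define e where "e = eta a \<beta>"
  define W where "W = (\<lambda>mu. of_real ((a * c)\<^sup>2) - 2 * mu\<^sup>2 * of_real (\<beta>\<^sup>2) :: complex)"
  have c: "0 < c" unfolding c_def by (auto intro: add_pos_nonneg)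
  have e: "0 < e" unfolding e_def eta_def c_def[symmetric] using a c \<beta> by simp
  have "2 * e\<^sup>2 * \<beta>\<^sup>2 = (a * c)\<^sup>2"
    unfolding e_def eta_def c_def[symmetric] using \<beta> by (simp add: power_divide power_mult_distrib)
  hence "complex_of_real ((a * c)\<^sup>2 - 2 * e\<^sup>2 * \<beta>\<^sup>2) = 0" by simp
  hence disc: "W (of_real e) = 0"
    unfolding W_def by (simp only: of_real_diff of_real_mult of_real_power of_real_numeral)
  have "isCont (\<lambda>mu. csqrt (W mu)) (of_real e)"
  proof (rule isCont_o2[where g = csqrt])
    show "isCont W (of_real e)" unfolding W_def by (intro continuous_intros)
    \<comment> \<open>\<open>csqrt\<close> is continuous, though not differentiable, at the branch point \<open>0\<close>\<close>
    show "isCont csqrt (W (of_real e))" unfolding disc by (rule isCont_csqrt_0)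
  qed
  moreover have "zeta1 a \<beta> = (\<lambda>mu. (2 * mu + of_real (a * c) + csqrt (W mu)) / of_real (2 * c))"
    and "zeta2 a \<beta> = (\<lambda>mu. (2 * mu + of_real (a * c) - csqrt (W mu)) / of_real (2 * c))"
    unfolding zeta1_def zeta2_def W_def c_def by (rule ext, rule refl)+
  ultimately have z: "isCont (zeta1 a \<beta>) (of_real e)" "isCont (zeta2 a \<beta>) (of_real e)"
    using c by (auto intro!: continuous_intros)
  have "zeta1 a \<beta> (of_real e) = of_real ((2 * e + a * c) / (2 * c))"
    and "zeta2 a \<beta> (of_real e) = of_real ((2 * e + a * c) / (2 * c))"
    unfolding zeta1_def zeta2_def c_def[symmetric] using disc unfolding W_def by simp_all
  moreover have "0 < (2 * e + a * c) / (2 * c)" using e a c by (simp add: add_pos_pos)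
  ultimately have "0 < Re (of_real (A\<^sup>2) + zeta1 a \<beta> (of_real e))"
    and "0 < Re (of_real (A\<^sup>2) + zeta2 a \<beta> (of_real e))"
    and "0 < Re (of_real e + of_real a + of_real (A\<^sup>2))"
    using e a by (simp_all add: add_nonneg_pos add_pos_nonneg)
  hence "isCont (\<lambda>mu. csqrt (of_real (A\<^sup>2) + zeta1 a \<beta> mu)) (of_real e)"
    and "isCont (\<lambda>mu. csqrt (of_real (A\<^sup>2) + zeta2 a \<beta> mu)) (of_real e)"
    and "isCont (\<lambda>mu. csqrt (mu + of_real a + of_real (A\<^sup>2))) (of_real e)"
    using z by (auto intro!: isCont_csqrt' continuous_intros simp: complex_nonpos_Reals_iff)
  thus ?thesis unfolding Aform_def Let_def e_def[symmetric] by (intro continuous_intros)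
qed

lemma Aa_eq_Aform:
  fixes a \<beta> :: real and lam :: complex and \<xi> :: "real^'n"
  assumes "0 < a" "\<beta> \<noteq> 0"
  shows "Aa a \<beta> lam \<xi> = Aform a \<beta> lam (norm \<xi>)"
proof (cases "lam = of_real (eta a \<beta>)")
  case True
  thus ?thesis unfolding Aa_def using isCont_Aform_eta[OF assms]
    by (simp add: isCont_def tendsto_Lim)
qed (simp add: Aa_def)

lemma tan_bound_imp_sq_bound:
  fixes \<beta> \<theta> :: real
  assumes \<theta>: "0 < \<theta>" "\<theta> < pi/2" and tan: "\<bar>\<beta>\<bar> / sqrt 2 < tan \<theta>"
  shows "\<beta>\<^sup>2 * (cos \<theta>)\<^sup>2 < 2 * (sin \<theta>)\<^sup>2"
proof -
  have co: "0 < cos \<theta>" using \<theta> by (auto intro: cos_gt_zero)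
  hence "\<bar>\<beta>\<bar> * cos \<theta> < sqrt 2 * sin \<theta>" using tan by (simp add: tan_def field_simps)
  hence "(\<bar>\<beta>\<bar> * cos \<theta>)\<^sup>2 < (sqrt 2 * sin \<theta>)\<^sup>2" using co by (intro power_strict_mono) auto
  thus ?thesis by (simp add: power_mult_distrib)
qed

theorem proposition3p5:
  fixes a r \<beta> \<theta> \<theta>0 :: real
  assumes "a > 0" and "r > 0" and "\<beta> \<noteq> 0"
    and "0 \<le> \<theta>0" and "\<theta>0 < \<theta>" and "\<theta> < pi / 2"
    and "tan \<theta>0 \<ge> \<bar>\<beta>\<bar> / sqrt 2"
  shows "\<exists>M > 0. \<forall>(\<xi> :: real^'n) lam. lam \<in> sector \<theta> r \<longrightarrow> cmod (Aa a \<beta> lam \<xi>) \<ge> M"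
proof -
  have \<theta>: "0 < \<theta>" "\<theta> < pi/2" using assms by linarith+
  have "tan \<theta>0 < tan \<theta>" using assms by (intro tan_monotone) auto
  hence K: "\<beta>\<^sup>2 * (cos \<theta>)\<^sup>2 < 2 * (sin \<theta>)\<^sup>2"
    using assms(7) by (intro tan_bound_imp_sq_bound[OF \<theta>]) simp
  have s: "0 < sin \<theta>" using \<theta> by (auto intro: sin_gt_zero)
  define M where "M = a\<^sup>2 * sin \<theta> * (sin \<theta> - sqrt (\<beta>\<^sup>2 / (2 + \<beta>\<^sup>2)))"
  have "0 < M" unfolding M_def using assms(1) s sqrt_beta_ratio_less_sin[OF s K] by simp
  moreover have "M \<le> cmod (Aa a \<beta> lam \<xi>)" if "lam \<in> sector \<theta> r" for lam and \<xi> :: "real^'n"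
  proof -
    have "lam \<in> closed_sector \<theta>" "lam \<noteq> 0"
      using that sector_subset_closed_sector[OF \<theta>] unfolding sector_def by auto
    thus ?thesis unfolding M_def Aa_eq_Aform[OF assms(1,3)] by (rule norm_Aform_ge[OF \<theta> K assms(1)])
  qed
  ultimately show ?thesis by blast
qed

end
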